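(* Let $D$ be a division ring. Then the only partial ideals of $D$ are $0$ and $D$.
   Context: For a ring $R$, a partial ideal is a subset $I\subseteq R$ such that for all $a,b\in R$ with $ab=ba$: if $a,b\in I$ then $a+b\in I$, and if $b\in I$ then $ab\in I$. *)

theory Defs
  imports Main
begin

text \<open>Nonemptiness is required (as for ideals); otherwise the empty set would be a counterexample.\<close>
definition partial_ideal :: "'a::ring set \<Rightarrow> bool" where
  "partial_ideal I \<longleftrightarrow> I \<noteq> {} \<and>
     (\<forall>a b. a * b = b * a \<longrightarrow>
        ((a \<in> I \<and> b \<in> I \<longrightarrow> a + b \<in> I) \<and> (b \<in> I \<longrightarrow> a * b \<in> I)))"

end

theory Submission
  imports Defs
begin

text \<open>Every element commutes with 1, so a partial ideal containing 1 contains everything;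
  in a division ring a nonzero member b yields 1 = b\<inverse> b, as b\<inverse> commutes with b.\<close>

lemma partial_ideal_mult_closed:
  assumes "partial_ideal I" and "a * b = b * a" and "b \<in> I"
  shows "a * b \<in> I"
  using assms unfolding partial_ideal_def by blast

lemma partial_ideal_zero:
  assumes "partial_ideal I"
  shows "0 \<in> I"
proof -
  obtain c where "c \<in> I"
    using assms unfolding partial_ideal_def by blast
  then show ?thesis
    using partial_ideal_mult_closed [OF assms, of 0 c] by simp
qed

lemma partial_ideal_one_imp_UNIV:
  fixes I :: "'a::ring_1 set"
  assumes "partial_ideal I" and "1 \<in> I"
  shows "I = UNIV"
proof -
  have "a \<in> I" for a
    using partial_ideal_mult_closed [OF assms(1), of a 1] assms(2) by simp
  then show ?thesis by blast
qed

lemma partial_ideal_nonzero_imp_one: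
  fixes I :: "'a::division_ring set"
  assumes "partial_ideal I" and "b \<in> I" and "b \<noteq> 0"
  shows "1 \<in> I"
proof -
  have "inverse b * b = b * inverse b"
    using \<open>b \<noteq> 0\<close> by simp
  then have "inverse b * b \<in> I"
    using partial_ideal_mult_closed [OF assms(1)] \<open>b \<in> I\<close> by blast
  then show ?thesis
    using \<open>b \<noteq> 0\<close> by simp
qed

theorem proposition2p7:
  fixes I :: "'a::division_ring set"
  assumes "partial_ideal I"
  shows "I = {0} \<or> I = UNIV"
proof (cases "I \<subseteq> {0}")
  case True
  then show ?thesis
    using partial_ideal_zero [OF assms] by blast
next
  case False
  then obtain b where "b \<in> I" and "b \<noteq> 0"
    by blast
  then have "1 \<in> I"
    using partial_ideal_nonzero_imp_one [OF assms] by blast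
  then show ?thesis
    using partial_ideal_one_imp_UNIV [OF assms] by blast
qed

end
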